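(* Let $(X,d)$ be a compact metric space, $\Lambda$ a finite nonempty set, and $\mathcal{F}=\{X; f_{\lambda}\mid\lambda\in\Lambda\}$ a parameterized iterated function system such that each $f_\lambda:X\to X$ is continuous and surjective. If $\mathcal{F}$ has the asymptotic average shadowing property, then every point of $X$ is a chain recurrent point of $\mathcal{F}$, i.e. $CR(\mathcal{F})=X$.
   Context: For $\sigma=\{\lambda_0,\lambda_1,\dots\}\in\Lambda^{\mathbb{Z}_+}$ write $\mathcal{F}_{\sigma_n}=f_{\lambda_{n-1}}\circ\cdots\circ f_{\lambda_0}$ ($\mathcal{F}_{\sigma_0}$ the identity). A sequence $\{x_i\}_{i\ge0}$ in $X$ is an asymptotic average pseudo-orbit of $\mathcal{F}$ if there is $\sigma=\{\lambda_0,\lambda_1,\dots\}\in\Lambda^{\mathbb{Z}_+}$ with $\lim_{n\to\infty}\frac1n\sum_{i=0}^{n-1}d(f_{\lambda_i}(x_i),x_{i+1})=0$; it is asymptotically shadowed in average by $z\in X$ if there is $\sigma\in\Lambda^{\mathbb{Z}_+}$ with $\lim_{n\to\infty}\frac1n\sum_{i=0}^{n-1}d(\mathcal{F}_{\sigma_i}(z),x_i)=0$. $\mathcal{F}$ has the asymptotic average shadowing property if every asymptotic average pseudo-orbit is asymptotically shadowed in average by some point of $X$. A point $x\in X$ is chain recurrent for $\mathcal{F}$ if for every $\epsilon>0$ there are points $x=p_0,p_1,\dots,p_n=x$ ($n\ge1$) and indices $\lambda_0,\dots,\lambda_{n-1}\in\Lambda$ with $d(f_{\lambda_i}(p_i),p_{i+1})\le\epsilon$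 for all $0\le i<n$. $CR(\mathcal{F})$ denotes the set of chain recurrent points of $\mathcal{F}$. *)

theory Defs
  imports "HOL-Analysis.Analysis"
begin

fun iter_comp :: "('b \<Rightarrow> 'a \<Rightarrow> 'a) \<Rightarrow> (nat \<Rightarrow> 'b) \<Rightarrow> nat \<Rightarrow> 'a \<Rightarrow> 'a" where
  "iter_comp f \<sigma> 0 = id"
| "iter_comp f \<sigma> (Suc n) = f (\<sigma> n) \<circ> iter_comp f \<sigma> n"

definition asym_avg_pseudo_orbit ::
  "'a::metric_space set \<Rightarrow> 'b set \<Rightarrow> ('b \<Rightarrow> 'a \<Rightarrow> 'a) \<Rightarrow> (nat \<Rightarrow> 'a) \<Rightarrow> bool" where
  "asym_avg_pseudo_orbit X L f x \<longleftrightarrow> (\<forall>i. x i \<in> X) \<and>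
     (\<exists>\<sigma>. (\<forall>i. \<sigma> i \<in> L) \<and>
        (\<lambda>n. (\<Sum>i<n. dist (f (\<sigma> i) (x i)) (x (Suc i))) / real n) \<longlonglongrightarrow> 0)"

definition asym_shadowed_in_avg ::
  "'a::metric_space set \<Rightarrow> 'b set \<Rightarrow> ('b \<Rightarrow> 'a \<Rightarrow> 'a) \<Rightarrow> (nat \<Rightarrow> 'a) \<Rightarrow> 'a \<Rightarrow> bool" where
  "asym_shadowed_in_avg X L f x z \<longleftrightarrow>
     (\<exists>\<sigma>. (\<forall>i. \<sigma> i \<in> L) \<and>
        (\<lambda>n. (\<Sum>i<n. dist (iter_comp f \<sigma> i z) (x i)) / real n) \<longlonglongrightarrow> 0)"

definition asym_avg_shadowing ::
  "'a::metric_space set \<Rightarrow> 'b set \<Rightarrow> ('b \<Rightarrow> 'a \<Rightarrow> 'a) \<Rightarrow> bool" where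
  "asym_avg_shadowing X L f \<longleftrightarrow>
     (\<forall>x. asym_avg_pseudo_orbit X L f x \<longrightarrow> (\<exists>z\<in>X. asym_shadowed_in_avg X L f x z))"

definition chain_recurrent ::
  "'a::metric_space set \<Rightarrow> 'b set \<Rightarrow> ('b \<Rightarrow> 'a \<Rightarrow> 'a) \<Rightarrow> 'a \<Rightarrow> bool" where
  "chain_recurrent X L f x \<longleftrightarrow> x \<in> X \<and>
     (\<forall>\<epsilon>>0. \<exists>n\<ge>1. \<exists>p::nat \<Rightarrow> 'a. \<exists>l::nat \<Rightarrow> 'b.
        p 0 = x \<and> p n = x \<and> (\<forall>i\<le>n. p i \<in> X) \<and> (\<forall>i<n. l i \<in> L) \<and>
        (\<forall>i<n. dist (f (l i) (p i)) (p (Suc i)) \<le> \<epsilon>))"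

definition CR :: "'a::metric_space set \<Rightarrow> 'b set \<Rightarrow> ('b \<Rightarrow> 'a \<Rightarrow> 'a) \<Rightarrow> 'a set" where
  "CR X L f = {x. chain_recurrent X L f x}"

end

theory Submission
  imports Defs "HOL-Library.Discrete_Functions" "HOL-Real_Asymp.Real_Asymp"
begin

text \<open>
  Fix \<open>x \<in> X\<close>, one map \<open>g = f l\<close> and, by surjectivity, points \<open>w m\<close> with \<open>g\<^sup>m (w m) = x\<close>.
  Concatenating for \<open>k = 0, 1, 2, \<dots>\<close> the \<open>g\<close>-orbit segments of length \<open>2\<^sup>k\<close> starting at
  \<open>w (2\<^sup>k\<^sup>-\<^sup>1)\<close> gives an asymptotic average pseudo-orbit, since its jumps occur only at the
  logarithmically many block boundaries, and every block passes through \<open>x\<close> halfway. An orbit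
  shadowing it in average is \<open>\<delta>\<close>-close to it at some time \<open>T\<close> in the second half of a long
  block and at some time \<open>T'\<close> in the first half of the next block. By uniform continuity this
  gives an \<open>\<epsilon>\<close>-chain from \<open>x\<close> along the pseudo-orbit to time \<open>T\<close>, along the shadowing orbit
  to time \<open>T'\<close>, and along the pseudo-orbit back to \<open>x\<close>.
\<close>

inductive eps_chain :: "'a::metric_space set \<Rightarrow> 'b set \<Rightarrow> ('b \<Rightarrow> 'a \<Rightarrow> 'a) \<Rightarrow> real \<Rightarrow> nat \<Rightarrow> 'a \<Rightarrow> 'a \<Rightarrow> bool"
  for X L f e where
  eps_chain_refl: "a \<in> X \<Longrightarrow> eps_chain X L f e 0 a a"
| eps_chain_snoc: "eps_chain X L f e n a b \<Longrightarrow> l \<in> L \<Longrightarrow> c \<in> X \<Longrightarrow> dist (f l b) c \<le> e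
    \<Longrightarrow> eps_chain X L f e (Suc n) a c"

lemma eps_chain_trans:
  assumes "eps_chain X L f e m a b" "eps_chain X L f e n b c"
  shows "eps_chain X L f e (m + n) a c"
  using assms(2,1) by (induction rule: eps_chain.induct) (auto intro: eps_chain.intros)

lemma eps_chain_step:
  assumes "a \<in> X" "l \<in> L" "c \<in> X" "dist (f l a) c \<le> e"
  shows "eps_chain X L f e 1 a c"
  using eps_chain_snoc[OF eps_chain_refl] assms by fastforce

lemma eps_chain_along_orbit:
  assumes "\<And>i. ys (Suc i) = f (\<sigma> i) (ys i)" "\<And>i. \<sigma> i \<in> L" "\<And>i. ys i \<in> X" "e \<ge> 0"
  shows "eps_chain X L f e k (ys a) (ys (a + k))"
proof (induction k)
  case (Suc k)
  show ?case
    using eps_chain_snoc[OF Suc assms(2)[of "a + k"] assms(3)[of "Suc (a + k)"]]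
    by (simp add: assms(1,4))
qed (simp add: assms eps_chain_refl)

lemma eps_chain_points:
  assumes "eps_chain X L f e n a b"
  shows "\<exists>p l. p 0 = a \<and> p n = b \<and> (\<forall>i\<le>n. p i \<in> X) \<and> (\<forall>i<n. l i \<in> L) \<and>
           (\<forall>i<n. dist (f (l i) (p i)) (p (Suc i)) \<le> e)"
  using assms
proof (induction rule: eps_chain.induct)
  case (eps_chain_refl a)
  then show ?case by (intro exI[of _ "\<lambda>_. a"]) auto
next
  case (eps_chain_snoc n a b l' c)
  then obtain p l where "p 0 = a" "p n = b" "\<forall>i\<le>n. p i \<in> X" "\<forall>i<n. l i \<in> L"
     "\<forall>i<n. dist (f (l i) (p i)) (p (Suc i)) \<le> e" by blast
  with eps_chain_snoc.hyps show ?case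
    by (intro exI[of _ "p(Suc n := c)"] exI[of _ "l(n := l')"]) (auto simp: less_Suc_eq le_Suc_eq)
qed

lemma chain_recurrentI:
  assumes "x \<in> X" "\<And>e. e > 0 \<Longrightarrow> \<exists>n\<ge>1. eps_chain X L f e n x x"
  shows "chain_recurrent X L f x"
  unfolding chain_recurrent_def using assms eps_chain_points by metis

lemma funpow_surj_on:
  assumes "g ` X = X" "y \<in> X"
  shows "\<exists>u\<in>X. (g ^^ m) u = y"
  using assms(2)
proof (induction m arbitrary: y)
  case (Suc m)
  from \<open>y \<in> X\<close> assms(1) obtain v where "v \<in> X" "g v = y"
    by (metis imageE)
  moreover from Suc.IH[OF \<open>v \<in> X\<close>] obtain u where "u \<in> X" "(g ^^ m) u = v"
    by blast
  ultimately show ?case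
    by (metis funpow.simps(2) o_apply)
qed auto

lemma funpow_preimages:
  assumes "g ` X = X" "x \<in> X"
  obtains w where "\<And>m. w m \<in> X" "\<And>m. (g ^^ m) (w m) = x"
proof -
  have "\<forall>m. \<exists>u. u \<in> X \<and> (g ^^ m) u = x"
    using funpow_surj_on[OF assms] by blast
  then show thesis
    using that by (metis choice)
qed

lemma funpow_in:
  assumes "g ` X \<subseteq> X" "u \<in> X"
  shows "(g ^^ m) u \<in> X"
  using assms by (induction m) auto

lemma finite_family_uniformly_equicontinuous:
  fixes f :: "'b \<Rightarrow> 'a::metric_space \<Rightarrow> 'c::metric_space"
  assumes "compact X" "finite L" "\<And>l. l \<in> L \<Longrightarrow> continuous_on X (f l)" "e > 0"
  obtains \<delta> where "\<delta> > 0" "\<And>l a b. l \<in> L \<Longrightarrow> a \<in> X \<Longrightarrow> b \<in> X \<Longrightarrow> dist a b < \<delta> \<Longrightarrow> dist (f l a) (f l b) < e"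
proof -
  have "\<forall>l\<in>L. \<exists>d>0. \<forall>a\<in>X. \<forall>b\<in>X. dist a b < d \<longrightarrow> dist (f l a) (f l b) < e"
  proof
    fix l assume "l \<in> L"
    then have "uniformly_continuous_on X (f l)"
      using assms(1,3) compact_uniformly_continuous by blast
    then show "\<exists>d>0. \<forall>a\<in>X. \<forall>b\<in>X. dist a b < d \<longrightarrow> dist (f l a) (f l b) < e"
      using \<open>e > 0\<close> unfolding uniformly_continuous_on_def by blast
  qed
  then obtain d where d: "\<forall>l\<in>L. d l > 0 \<and> (\<forall>a\<in>X. \<forall>b\<in>X. dist a b < d l \<longrightarrow> dist (f l a) (f l b) < e)"
    by (auto dest!: bchoice)
  define \<delta> where "\<delta> = Min (insert 1 (d ` L))"
  have "\<delta> > 0"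
    using assms(2) d by (simp add: \<delta>_def)
  moreover have "dist (f l a) (f l b) < e"
    if "l \<in> L" "a \<in> X" "b \<in> X" "dist a b < \<delta>" for l a b
  proof -
    have "\<delta> \<le> d l"
      using assms(2) that(1) by (simp add: \<delta>_def)
    with that d show ?thesis by auto
  qed
  ultimately show thesis by (rule that)
qed

lemma card_powers_of_two_below:
  "card {i. i < n \<and> (\<exists>k. Suc (Suc i) = 2 ^ k)} \<le> Suc (floor_log (Suc n))"
proof -
  let ?S = "{i. i < n \<and> (\<exists>k. Suc (Suc i) = 2 ^ k)}"
  let ?K = "(\<lambda>k. 2 ^ k - 2 :: nat) ` {..floor_log (Suc n)}"
  have "?S \<subseteq> ?K"
  proof
    fix i assume "i \<in> ?S"
    then obtain k where "i < n" and k: "Suc (Suc i) = 2 ^ k" by blast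
    then have "2 ^ k \<le> Suc n" by simp
    then have "floor_log (2 ^ k) \<le> floor_log (Suc n)" by (rule floor_log_le_iff)
    with k show "i \<in> ?K"
      by (intro image_eqI[of _ _ k]) auto
  qed
  then have "card ?S \<le> card ?K"
    by (rule card_mono[rotated]) simp
  also have "\<dots> \<le> card {..floor_log (Suc n)}"
    by (rule card_image_le) simp
  finally show ?thesis by simp
qed

lemma average_tendsto_zero_if_supported_on_powers_of_two:
  fixes r :: "nat \<Rightarrow> real"
  assumes "\<And>i. 0 \<le> r i" "\<And>i. r i \<le> D" "\<And>i. \<nexists>k. Suc (Suc i) = 2 ^ k \<Longrightarrow> r i = 0"
  shows "(\<lambda>n. (\<Sum>i<n. r i) / real n) \<longlonglongrightarrow> 0"
proof (rule tendsto_sandwich[where f = "\<lambda>_. 0" and h = "\<lambda>n. D * (log 2 (real (Suc n)) + 1) / real n"])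
  have "(\<Sum>i<n. r i) \<le> D * (log 2 (real (Suc n)) + 1)" for n
  proof -
    let ?S = "{i. i < n \<and> (\<exists>k. Suc (Suc i) = 2 ^ k)}"
    have "D \<ge> 0" using assms(1,2) order_trans by blast
    have "(\<Sum>i<n. r i) = (\<Sum>i\<in>?S. r i)"
      by (rule sum.mono_neutral_right) (use assms(3) in auto)
    also have "\<dots> \<le> D * real (card ?S)"
      using sum_bounded_above[of ?S r D] assms(2) by (simp add: mult.commute)
    also have "\<dots> \<le> D * real (Suc (floor_log (Suc n)))"
      using card_powers_of_two_below[of n] \<open>D \<ge> 0\<close> by (intro mult_left_mono) auto
    also have "\<dots> \<le> D * (log 2 (real (Suc n)) + 1)"
      using le_log2_of_power[OF floor_log_exp2_le[of "Suc n"]] \<open>D \<ge> 0\<close>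
      by (intro mult_left_mono) auto
    finally show ?thesis .
  qed
  then show "\<forall>\<^sub>F n in sequentially. (\<Sum>i<n. r i) / real n \<le> D * (log 2 (real (Suc n)) + 1) / real n"
    by (intro always_eventually allI divide_right_mono) auto
  show "\<forall>\<^sub>F n in sequentially. 0 \<le> (\<Sum>i<n. r i) / real n"
    using assms(1) by (intro always_eventually allI divide_nonneg_nonneg sum_nonneg) auto
  show "(\<lambda>n. D * (log 2 (real (Suc n)) + 1) / real n) \<longlonglongrightarrow> 0"
    by real_asymp
qed simp

lemma small_term_in_long_interval:
  fixes d :: "nat \<Rightarrow> real"
  assumes "\<And>i. 0 \<le> d i" "a < b" "b \<le> n" "n \<le> 4 * (b - a)" "(\<Sum>i<n. d i) / real n < \<delta> / 4"
  obtains i where "a \<le> i" "i < b" "d i < \<delta>"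
proof (rule ccontr)
  assume "\<not> thesis"
  with that have "\<And>i. i \<in> {a..<b} \<Longrightarrow> \<delta> \<le> d i" by force
  then have "real (b - a) * \<delta> \<le> (\<Sum>i\<in>{a..<b}. d i)"
    using sum_mono[of "{a..<b}" "\<lambda>_. \<delta>" d] by simp
  also have "\<dots> \<le> (\<Sum>i<n. d i)"
    using assms(1,3) by (intro sum_mono2) auto
  finally have sum_ge: "real (b - a) * \<delta> \<le> (\<Sum>i<n. d i)" .
  have "0 < n" using assms(2,3) by simp
  then have sum_lt: "(\<Sum>i<n. d i) < real n * \<delta> / 4"
    using assms(5) by (simp add: pos_divide_less_eq mult.commute)
  have "real n \<le> real (4 * (b - a))"
    using assms(4) by (rule of_nat_mono)
  moreover have "0 < \<delta>"
  proof -
    have "0 \<le> (\<Sum>i<n. d i)"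
      using assms(1) by (simp add: sum_nonneg)
    with sum_lt have "0 < real n * \<delta>"
      by linarith
    with \<open>0 < n\<close> show ?thesis
      by (simp add: zero_less_mult_iff)
  qed
  ultimately have "real n * \<delta> \<le> 4 * (real (b - a) * \<delta>)"
    using mult_right_mono[of "real n" "real (4 * (b - a))" \<delta>] by simp
  with sum_ge sum_lt show False by linarith
qed

lemma small_terms_in_dyadic_windows:
  fixes d :: "nat \<Rightarrow> real"
  assumes "\<And>i. 0 \<le> d i" "(\<lambda>n. (\<Sum>i<n. d i) / real n) \<longlonglongrightarrow> 0" "\<delta> > 0"
  obtains N T T' where "3 * 2 ^ N \<le> Suc T" "Suc T < 4 * 2 ^ N" "4 * 2 ^ N \<le> Suc T'" "Suc T' < 6 * 2 ^ N"
    "d T < \<delta>" "d T' < \<delta>"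
proof -
  obtain N where N0: "\<forall>n\<ge>N. norm ((\<Sum>i<n. d i) / real n - 0) < \<delta> / 4"
    using LIMSEQ_D[OF assms(2), of "\<delta> / 4"] \<open>\<delta> > 0\<close> by auto
  have N: "(\<Sum>i<n. d i) / real n < \<delta> / 4" if "n \<ge> N" for n
    by (rule order_le_less_trans[OF _ N0[rule_format, OF that]]) (simp add: divide_right_mono)
  define m :: nat where "m = 2 ^ N"
  have "N < m" "1 \<le> m" unfolding m_def by simp_all
  obtain T where T: "3 * m - 1 \<le> T" "T < 4 * m - 1" "d T < \<delta>"
  proof (rule small_term_in_long_interval[where d = d and n = "4 * m - 1"
        and a = "3 * m - 1" and b = "4 * m - 1" and \<delta> = \<delta>])
    show "(\<Sum>i<4 * m - 1. d i) / real (4 * m - 1) < \<delta> / 4"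
      by (rule N) (use \<open>N < m\<close> in simp)
  qed (use that assms(1) \<open>1 \<le> m\<close> in auto)
  obtain T' where T': "4 * m - 1 \<le> T'" "T' < 6 * m - 1" "d T' < \<delta>"
  proof (rule small_term_in_long_interval[where d = d and n = "8 * m - 1"
        and a = "4 * m - 1" and b = "6 * m - 1" and \<delta> = \<delta>])
    show "(\<Sum>i<8 * m - 1. d i) / real (8 * m - 1) < \<delta> / 4"
      by (rule N) (use \<open>N < m\<close> in simp)
  qed (use that assms(1) \<open>1 \<le> m\<close> in auto)
  show thesis
    by (rule that[of N T T']) (use T T' \<open>1 \<le> m\<close> in \<open>simp_all add: m_def\<close>)
qed

text \<open>
  Block \<open>k\<close> of \<open>dyadic_orbit g w\<close> occupies the indices \<open>2\<^sup>k - 1 \<le> i < 2\<^sup>k\<^sup>+\<^sup>1 - 1\<close> and is the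
  \<open>g\<close>-orbit segment of length \<open>2\<^sup>k\<close> starting at \<open>w (2\<^sup>k div 2)\<close>; when \<open>w\<close> is a sequence of
  preimages of \<open>x\<close>, the segment passes through \<open>x\<close> halfway.
\<close>

definition dyadic_orbit :: "('a \<Rightarrow> 'a) \<Rightarrow> (nat \<Rightarrow> 'a) \<Rightarrow> nat \<Rightarrow> 'a" where
  "dyadic_orbit g w i = (g ^^ (Suc i - 2 ^ floor_log (Suc i))) (w (2 ^ floor_log (Suc i) div 2))"

lemma dyadic_orbit_block:
  assumes "2 ^ k \<le> Suc i" "Suc i < 2 * 2 ^ k"
  shows "dyadic_orbit g w i = (g ^^ (Suc i - 2 ^ k)) (w (2 ^ k div 2))"
  using floor_log_eqI[of "Suc i" k] assms unfolding dyadic_orbit_def by simp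

lemma dyadic_orbit_after_return:
  assumes "(g ^^ 2 ^ N) (w (2 ^ N)) = x" "3 * 2 ^ N \<le> Suc T" "Suc T < 4 * 2 ^ N"
  shows "dyadic_orbit g w T = (g ^^ (Suc T - 3 * 2 ^ N)) x"
proof -
  have "Suc T - 2 * 2 ^ N = (Suc T - 3 * 2 ^ N) + 2 ^ N"
    using assms(2) by simp
  moreover have "dyadic_orbit g w T = (g ^^ (Suc T - 2 * 2 ^ N)) (w (2 ^ N))"
    using dyadic_orbit_block[of "Suc N" T g w] assms(2,3) by simp
  ultimately have "dyadic_orbit g w T = (g ^^ (Suc T - 3 * 2 ^ N)) ((g ^^ 2 ^ N) (w (2 ^ N)))"
    by (simp only: funpow_add o_apply)
  with assms(1) show ?thesis
    by simp
qed

lemma dyadic_orbit_before_return: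
  assumes "4 * 2 ^ N \<le> Suc T" "Suc (Suc T) < 8 * 2 ^ N"
  shows "dyadic_orbit g w T = (g ^^ (Suc T - 4 * 2 ^ N)) (w (2 * 2 ^ N))"
    and "dyadic_orbit g w (Suc T) = g (dyadic_orbit g w T)"
proof -
  have pow: "2 ^ Suc (Suc N) = 4 * (2::nat) ^ N" "4 * 2 ^ N div 2 = 2 * (2::nat) ^ N"
    by simp_all
  show "dyadic_orbit g w T = (g ^^ (Suc T - 4 * 2 ^ N)) (w (2 * 2 ^ N))"
    using dyadic_orbit_block[of "Suc (Suc N)" T g w] assms unfolding pow by simp
  then show "dyadic_orbit g w (Suc T) = g (dyadic_orbit g w T)"
    using dyadic_orbit_block[of "Suc (Suc N)" "Suc T" g w] assms unfolding pow
    by (simp add: Suc_diff_le)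
qed

lemma dyadic_orbit_Suc:
  assumes "\<nexists>k. Suc (Suc i) = 2 ^ k"
  shows "dyadic_orbit g w (Suc i) = g (dyadic_orbit g w i)"
proof -
  define k where "k = floor_log (Suc i)"
  have k: "2 ^ k \<le> Suc i" "Suc i < 2 * 2 ^ k"
    unfolding k_def by (simp_all add: floor_log_exp2_le floor_log_exp2_gt)
  moreover have "Suc (Suc i) < 2 * 2 ^ k"
    using k assms by (metis Suc_lessI power_Suc)
  ultimately show ?thesis
    by (simp add: dyadic_orbit_block[of k] Suc_diff_le)
qed

lemma dyadic_orbit_in:
  assumes "g ` X \<subseteq> X" "\<And>m. w m \<in> X"
  shows "dyadic_orbit g w i \<in> X"
  unfolding dyadic_orbit_def using assms by (simp add: funpow_in)

lemma dyadic_orbit_asym_avg_pseudo_orbit: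
  assumes "bounded X" "l \<in> L" "f l ` X \<subseteq> X" "\<And>m. w m \<in> X"
  shows "asym_avg_pseudo_orbit X L f (dyadic_orbit (f l) w)"
proof -
  let ?xs = "dyadic_orbit (f l) w"
  have "(\<lambda>n. (\<Sum>i<n. dist (f l (?xs i)) (?xs (Suc i))) / real n) \<longlonglongrightarrow> 0"
  proof (rule average_tendsto_zero_if_supported_on_powers_of_two)
    show "dist (f l (?xs i)) (?xs (Suc i)) \<le> diameter X" for i
      using assms by (intro diameter_bounded_bound) (auto intro: dyadic_orbit_in)
  qed (simp_all add: dyadic_orbit_Suc)
  with assms show ?thesis
    unfolding asym_avg_pseudo_orbit_def by (auto intro: dyadic_orbit_in exI[of _ "\<lambda>_. l"])
qed

lemma eps_chain_through_orbit:
  assumes orbit: "\<And>i. zs (Suc i) = f (\<sigma> i) (zs i)" "\<And>i. \<sigma> i \<in> L" "\<And>i. zs i \<in> X"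
    and modulus: "\<And>l a b. l \<in> L \<Longrightarrow> a \<in> X \<Longrightarrow> b \<in> X \<Longrightarrow> dist a b < \<delta> \<Longrightarrow> dist (f l a) (f l b) < e"
    and "0 \<le> e" "T < T'" "a \<in> X" "dist a (zs T) < \<delta>" "b \<in> X" "dist (zs T') b < \<delta>" "l \<in> L" "f l b \<in> X"
  shows "eps_chain X L f e (Suc (T' - T)) a (f l b)"
proof -
  have enter: "eps_chain X L f e 1 a (zs (Suc T))"
  proof (rule eps_chain_step[where l = "\<sigma> T"])
    have "dist (f (\<sigma> T) a) (f (\<sigma> T) (zs T)) < e"
      by (rule modulus) (simp_all add: orbit(2,3) \<open>a \<in> X\<close> \<open>dist a (zs T) < \<delta>\<close>)
    then show "dist (f (\<sigma> T) a) (zs (Suc T)) \<le> e"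
      by (simp add: orbit(1))
  qed (simp_all add: orbit(2,3) \<open>a \<in> X\<close>)
  have leave: "eps_chain X L f e 1 (zs T') (f l b)"
  proof (rule eps_chain_step)
    have "dist (f l (zs T')) (f l b) < e"
      by (rule modulus) (simp_all add: orbit(3) \<open>l \<in> L\<close> \<open>b \<in> X\<close> \<open>dist (zs T') b < \<delta>\<close>)
    then show "dist (f l (zs T')) (f l b) \<le> e"
      by simp
  qed (simp_all add: orbit(3) \<open>l \<in> L\<close> \<open>f l b \<in> X\<close>)
  have follow: "eps_chain X L f e (T' - Suc T) (zs (Suc T)) (zs T')"
    using eps_chain_along_orbit[where ys = zs and \<sigma> = \<sigma>, OF orbit, of e "T' - Suc T" "Suc T"]
      \<open>0 \<le> e\<close> \<open>T < T'\<close> by simp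
  have "Suc (T' - T) = 1 + (T' - Suc T) + 1"
    using \<open>T < T'\<close> by simp
  then show ?thesis
    using eps_chain_trans[OF eps_chain_trans[OF enter follow] leave] by (simp only:)
qed

lemma eps_cycle_from_shadowed_dyadic_orbit:
  fixes f :: "'b \<Rightarrow> 'a::metric_space \<Rightarrow> 'a"
  assumes "l \<in> L" and maps: "\<And>l. l \<in> L \<Longrightarrow> f l ` X \<subseteq> X"
    and w: "\<And>m. w m \<in> X" "\<And>m. (f l ^^ m) (w m) = x"
    and modulus: "\<And>l a b. l \<in> L \<Longrightarrow> a \<in> X \<Longrightarrow> b \<in> X \<Longrightarrow> dist a b < \<delta> \<Longrightarrow> dist (f l a) (f l b) < e"
    and "0 \<le> e" "\<delta> > 0" and \<sigma>: "\<And>i. \<sigma> i \<in> L" and "z \<in> X"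
    and shadow: "(\<lambda>n. (\<Sum>i<n. dist (iter_comp f \<sigma> i z) (dyadic_orbit (f l) w i)) / real n) \<longlonglongrightarrow> 0"
  shows "\<exists>n\<ge>1. eps_chain X L f e n x x"
proof -
  define g where "g = f l"
  define xs where "xs = dyadic_orbit g w"
  define zs where "zs i = iter_comp f \<sigma> i z" for i
  have g: "g ` X \<subseteq> X" unfolding g_def using maps \<open>l \<in> L\<close> by auto
  have zs: "zs (Suc i) = f (\<sigma> i) (zs i)" "zs i \<in> X" for i
    unfolding zs_def using maps \<sigma> \<open>z \<in> X\<close> by (induction i) auto
  have xs: "xs i \<in> X" for i
    unfolding xs_def using g w(1) by (rule dyadic_orbit_in)
  have "x \<in> X" using w[of 0] by simp
  have avg: "(\<lambda>n. (\<Sum>i<n. dist (zs i) (xs i)) / real n) \<longlonglongrightarrow> 0"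
    using shadow unfolding zs_def xs_def g_def .
  obtain N T T' where T: "3 * 2 ^ N \<le> Suc T" "Suc T < 4 * 2 ^ N" "dist (zs T) (xs T) < \<delta>"
    and T': "4 * 2 ^ N \<le> Suc T'" "Suc T' < 6 * 2 ^ N" "dist (zs T') (xs T') < \<delta>"
    using small_terms_in_dyadic_windows[where d = "\<lambda>i. dist (zs i) (xs i)", OF zero_le_dist avg \<open>\<delta> > 0\<close>]
    by blast
  have xs_T: "xs T = (g ^^ (Suc T - 3 * 2 ^ N)) x"
    unfolding xs_def using w(2) T(1,2) unfolding g_def by (rule dyadic_orbit_after_return)
  define j where "j = Suc T' - 4 * 2 ^ N"
  have xs_T': "xs T' = (g ^^ j) (w (2 * 2 ^ N))" "xs (Suc T') = g (xs T')"
    using dyadic_orbit_before_return[of N T' g w] T' unfolding xs_def j_def by simp_all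
  have start: "eps_chain X L f e (Suc T - 3 * 2 ^ N) x (xs T)"
    using eps_chain_along_orbit[where ys = "\<lambda>i. (g ^^ i) x" and \<sigma> = "\<lambda>_. l" and a = 0]
      \<open>l \<in> L\<close> funpow_in[OF g \<open>x \<in> X\<close>] \<open>0 \<le> e\<close> xs_T by (simp add: g_def)
  have detour: "eps_chain X L f e (Suc (T' - T)) (xs T) (xs (Suc T'))"
    using eps_chain_through_orbit[where zs = zs and \<sigma> = \<sigma> and T = T and T' = T'
        and a = "xs T" and b = "xs T'" and l = l and \<delta> = \<delta>, OF zs(1) \<sigma> zs(2) modulus \<open>0 \<le> e\<close>]
      T T' xs[of T] xs[of T'] xs[of "Suc T'"] xs_T'(2) \<open>l \<in> L\<close> by (simp add: dist_commute g_def)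
  have "Suc j \<le> 2 * 2 ^ N"
    using T' unfolding j_def by simp
  then have return: "eps_chain X L f e (2 * 2 ^ N - Suc j) (xs (Suc T')) x"
    using eps_chain_along_orbit[where ys = "\<lambda>i. (g ^^ i) (w (2 * 2 ^ N))" and \<sigma> = "\<lambda>_. l"
        and a = "Suc j" and k = "2 * 2 ^ N - Suc j"]
      \<open>l \<in> L\<close> funpow_in[OF g w(1)] \<open>0 \<le> e\<close> xs_T' w(2) by (simp add: g_def)
  have "eps_chain X L f e (Suc T - 3 * 2 ^ N + Suc (T' - T) + (2 * 2 ^ N - Suc j)) x x"
    by (rule eps_chain_trans[OF eps_chain_trans[OF start detour] return])
  then show ?thesis
    by (intro exI[of _ "Suc T - 3 * 2 ^ N + Suc (T' - T) + (2 * 2 ^ N - Suc j)"]) simp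
qed

theorem mainTheorem5:
  fixes X :: "'a::metric_space set" and L :: "'b set" and f :: "'b \<Rightarrow> 'a \<Rightarrow> 'a"
  assumes "compact X"
    and "finite L" and "L \<noteq> {}"
    and "\<And>l. l \<in> L \<Longrightarrow> continuous_on X (f l)"
    and "\<And>l. l \<in> L \<Longrightarrow> f l ` X = X"
    and "asym_avg_shadowing X L f"
  shows "CR X L f = X"
proof (intro equalityI subsetI)
  fix x assume "x \<in> CR X L f"
  then show "x \<in> X" unfolding CR_def chain_recurrent_def by simp
next
  fix x assume "x \<in> X"
  obtain l where "l \<in> L" using assms(3) by blast
  have maps: "\<And>l. l \<in> L \<Longrightarrow> f l ` X \<subseteq> X" using assms(5) by blast
  obtain w where w: "\<And>m. w m \<in> X" "\<And>m. (f l ^^ m) (w m) = x"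
    using funpow_preimages[OF assms(5)[OF \<open>l \<in> L\<close>] \<open>x \<in> X\<close>] by blast
  have "asym_avg_pseudo_orbit X L f (dyadic_orbit (f l) w)"
    using compact_imp_bounded[OF assms(1)] \<open>l \<in> L\<close> maps[OF \<open>l \<in> L\<close>] w(1)
    by (rule dyadic_orbit_asym_avg_pseudo_orbit)
  then obtain z \<sigma> where z: "z \<in> X" and \<sigma>: "\<And>i. \<sigma> i \<in> L"
    and lim: "(\<lambda>n. (\<Sum>i<n. dist (iter_comp f \<sigma> i z) (dyadic_orbit (f l) w i)) / real n) \<longlonglongrightarrow> 0"
    using assms(6) unfolding asym_avg_shadowing_def asym_shadowed_in_avg_def by blast
  have "chain_recurrent X L f x"
  proof (rule chain_recurrentI[OF \<open>x \<in> X\<close>])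
    fix e :: real assume "e > 0"
    obtain \<delta> where "\<delta> > 0" and modulus:
      "\<And>l a b. l \<in> L \<Longrightarrow> a \<in> X \<Longrightarrow> b \<in> X \<Longrightarrow> dist a b < \<delta> \<Longrightarrow> dist (f l a) (f l b) < e"
      using finite_family_uniformly_equicontinuous[where f = f, OF assms(1,2,4) \<open>e > 0\<close>] by blast
    show "\<exists>n\<ge>1. eps_chain X L f e n x x"
      by (rule eps_cycle_from_shadowed_dyadic_orbit[OF \<open>l \<in> L\<close> maps w modulus
            less_imp_le[OF \<open>e > 0\<close>] \<open>\<delta> > 0\<close> \<sigma> z lim])
  qed
  then show "x \<in> CR X L f" unfolding CR_def by simp
qed

end
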